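(* Let $\mathcal{H}$ be a finite-dimensional complex Hilbert space and $n\ge 0$. Let $\mathcal{K}_{n+1}$ be a map of $n+1$ operator arguments on $\mathcal H$ which (a) admits a decomposition $\mathcal{K}_{n+1}=\sum_{(m_0,\ldots,m_n)}\mathcal{K}_{m_0,\ldots,m_n}$ into finitely many completely positive multi-variable maps, where each $\mathcal{K}_{m_0,\ldots,m_n}$ is homogeneous of degree $m_i\in\mathbb{Z}_{\ge0}$ in its $i$-th argument (i.e. $\mathcal K_{m_0,\ldots,m_n}[\ldots,z\hat\rho_i,\ldots]=z^{m_i}\mathcal K_{m_0,\ldots,m_n}[\ldots,\hat\rho_i,\ldots]$ for all $z\in\mathbb C$), each $\mathcal K_{m_0,\ldots,m_n}$ with exactly one $m_i=1$ and all others zero being linear in that argument; (b) satisfies $\mathcal{K}_{n+1}[p\hat\rho_n,\ldots,p\hat\rho_0]=p\,\mathcal{K}_{n+1}[\hat\rho_n,\ldots,\hat\rho_0]$ for all $p\in[0,1]$ and all density matrices $\hat\rho_i$; and (c) is trace preserving on density matrices, i.e. $\mathrm{Tr}\,\mathcal{K}_{n+1}[\hat\rho_n,\ldots,\hat\rho_0]=1$ whenever all $\hat\rho_i$ are density matrices. Then there exist operators $V_{\alpha n m}$ on $\mathcal H$ ($0\le m\le n$, $\alpha$ in a finite index set) and numbers $p_{nm}\ge 0$ with $\sum_{m=0}^n p_{nm}=1$ and $\sum_\alpha V_{\alpha nm}V_{\alpha nm}^\dagger=p_{nm}\hat I$ for each $m$, such that for all density matrices $\hat\rho_0,\ldots,\hat\rho_n$,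 $$\mathcal{K}_{n+1}[\hat\rho_n,\ldots,\hat\rho_0]=\sum_{m=0}^n\sum_\alpha V_{\alpha nm}^\dagger\,\hat\rho_m\,V_{\alpha nm}.$$
   Context: A map $\mathcal K$ of $n+1$ operator arguments is completely positive (in the multi-variable sense of Ando–Choi) if for every $k$ and every $(n+1)$-tuple of positive $k\times k$ block operator matrices $\hat\rho_m=(\hat\rho_{m,ij})_{i,j}$ ($0\le m\le n$), the block matrix with $(i,j)$ block $\mathcal{K}[\hat\rho_{n,ij},\ldots,\hat\rho_{0,ij}]$ is positive. Hypothesis (a) is the Ando–Choi decomposition of multi-variable CP maps (anti-homogeneous parts are excluded), and (b) is the non-signalling condition expressed on sub-normalized states. *)

theory Defs
  imports "HOL-Analysis.Analysis"
begin

text \<open>Operators on the finite-dimensional complex Hilbert space H = complex^'d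
  are represented by matrices of type complex^'d^'d.\<close>

type_synonym 'd op = "complex^'d^'d"

definition adj :: "'d::finite op \<Rightarrow> 'd op" where
  "adj A = (\<chi> i j. cnj (A $ j $ i))"

definition smat :: "complex \<Rightarrow> 'd::finite op \<Rightarrow> 'd op" where
  "smat z A = (\<chi> i j. z * A $ i $ j)"

definition psd :: "'d::finite op \<Rightarrow> bool" where
  "psd A \<longleftrightarrow> (\<forall>x :: complex^'d.
     (let q = (\<Sum>i\<in>UNIV. \<Sum>j\<in>UNIV. cnj (x $ i) * A $ i $ j * x $ j)
      in Im q = 0 \<and> 0 \<le> Re q))"

text \<open>Positivity of the k x k block operator matrix with (i,j) block B i j,
  acting on H^k (vectors x 0, ..., x (k-1) in H).\<close>
definition block_psd :: "nat \<Rightarrow> (nat \<Rightarrow> nat \<Rightarrow> 'd::finite op) \<Rightarrow> bool" where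
  "block_psd k B \<longleftrightarrow> (\<forall>x :: nat \<Rightarrow> complex^'d.
     (let q = (\<Sum>i<k. \<Sum>j<k. \<Sum>a\<in>UNIV. \<Sum>b\<in>UNIV. cnj (x i $ a) * B i j $ a $ b * x j $ b)
      in Im q = 0 \<and> 0 \<le> Re q))"

definition density :: "'d::finite op \<Rightarrow> bool" where
  "density \<rho> \<longleftrightarrow> psd \<rho> \<and> trace \<rho> = 1"

text \<open>A map of n+1 operator arguments is modelled as a function on lists;
  the argument list [\<rho>_0, ..., \<rho>_n] corresponds to the paper's K[\<rho>_n, ..., \<rho>_0].
  Multi-variable complete positivity (Ando--Choi): rho_b m i j is the (i,j) block of the
  m-th block matrix.\<close>
definition mv_CP :: "nat \<Rightarrow> ('d::finite op list \<Rightarrow> 'd op) \<Rightarrow> bool" where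
  "mv_CP n K \<longleftrightarrow> (\<forall>k (\<rho>b :: nat \<Rightarrow> nat \<Rightarrow> nat \<Rightarrow> 'd op).
     (\<forall>m\<le>n. block_psd k (\<rho>b m)) \<longrightarrow>
     block_psd k (\<lambda>i j. K (map (\<lambda>m. \<rho>b m i j) [0..<Suc n])))"

definition homog_in :: "nat \<Rightarrow> ('d::finite op list \<Rightarrow> 'd op) \<Rightarrow> nat \<Rightarrow> nat \<Rightarrow> bool" where
  "homog_in n K i deg \<longleftrightarrow> (\<forall>\<rho>s z. length \<rho>s = Suc n \<longrightarrow>
     K (\<rho>s[i := smat z (\<rho>s ! i)]) = smat (z ^ deg) (K \<rho>s))"

text \<open>Additivity (hence, with homogeneity of degree 1, linearity) in the i-th argument.\<close>
definition additive_in :: "nat \<Rightarrow> ('d::finite op list \<Rightarrow> 'd op) \<Rightarrow> nat \<Rightarrow> bool" where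
  "additive_in n K i \<longleftrightarrow> (\<forall>\<rho>s A B. length \<rho>s = Suc n \<longrightarrow>
     K (\<rho>s[i := A + B]) = K (\<rho>s[i := A]) + K (\<rho>s[i := B]))"

end

theory Submission
  imports Defs
begin

text \<open>Evaluating the non-signalling identity \<open>K[p\<rho>] = p K[\<rho>]\<close> on the homogeneous
  decomposition gives a polynomial identity in \<open>p \<in> [0,1]\<close>; comparing coefficients kills every
  part except those of total degree one, so \<open>K\<close> is a sum of maps \<open>L\<^sub>l\<close>, each linear in
  its own argument \<open>\<rho>\<^sub>l\<close> only. Each \<open>L\<^sub>l\<close> is completely positive, so its Choi matrix
  is positive semidefinite; writing it as a Gram matrix (by successive Schur complements) gives
  Kraus operators. Finally, trace preservation with all other arguments fixed makes
  \<open>tr L\<^sub>l \<rho>\<close> independent of the state \<open>\<rho>\<close>, which forces \<open>\<Sum> V V\<^sup>\<dagger> = p\<^sub>l I\<close>; equal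
  arguments then give \<open>\<Sum> p\<^sub>l = 1\<close>.\<close>

section \<open>Positive semidefinite kernels\<close>

definition quad_form :: "'i set \<Rightarrow> ('i \<Rightarrow> 'i \<Rightarrow> complex) \<Rightarrow> ('i \<Rightarrow> complex) \<Rightarrow> complex" where
  "quad_form I C x = (\<Sum>i\<in>I. \<Sum>j\<in>I. cnj (x i) * C i j * x j)"

definition psd_kernel :: "'i set \<Rightarrow> ('i \<Rightarrow> 'i \<Rightarrow> complex) \<Rightarrow> bool" where
  "psd_kernel I C \<longleftrightarrow> (\<forall>x. Im (quad_form I C x) = 0 \<and> 0 \<le> Re (quad_form I C x))"

lemma psd_kernelD:
  assumes "psd_kernel I C"
  shows "Im (quad_form I C x) = 0" and "0 \<le> Re (quad_form I C x)"
  using assms unfolding psd_kernel_def by blast+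

lemma quad_form_restrict:
  assumes "finite I" "J \<subseteq> I" "\<forall>i\<in>I - J. x i = 0"
  shows "quad_form I C x = quad_form J C x"
proof -
  have "(\<Sum>j\<in>I. cnj (x i) * C i j * x j) = (\<Sum>j\<in>J. cnj (x i) * C i j * x j)" for i
    using assms by (intro sum.mono_neutral_right) auto
  then show ?thesis
    unfolding quad_form_def using assms by (simp, intro sum.mono_neutral_right) auto
qed

lemma quad_form_single:
  assumes "finite I" "i \<in> I"
  shows "quad_form I C (\<lambda>p. if p = i then a else 0) = cnj a * C i i * a"
  using assms by (subst quad_form_restrict[where J = "{i}"]) (auto simp: quad_form_def)

lemma quad_form_pair:
  assumes "finite I" "i \<in> I" "j \<in> I" "i \<noteq> j"
  shows "quad_form I C (\<lambda>p. if p = i then a else if p = j then b else 0)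
     = cnj a * C i i * a + cnj a * C i j * b + cnj b * C j i * a + cnj b * C j j * b"
  using assms by (subst quad_form_restrict[where J = "{i, j}"]) (auto simp: quad_form_def)

lemma psd_kernel_diag:
  assumes "finite I" "psd_kernel I C" "i \<in> I"
  shows "C i i = of_real (Re (C i i))" and "0 \<le> Re (C i i)"
  using psd_kernelD[OF assms(2), of "\<lambda>p. if p = i then 1 else 0"]
  by (simp_all add: quad_form_single[OF assms(1,3)] complex_eq_iff)

lemma psd_kernel_hermitian:
  assumes "finite I" "psd_kernel I C" "i \<in> I" "j \<in> I"
  shows "C j i = cnj (C i j)"
proof (cases "i = j")
  case True
  then show ?thesis using psd_kernel_diag(1)[OF assms(1-3)] by (metis complex_cnj_complex_of_real)
next
  case False
  have "Im (C i i) = 0" "Im (C j j) = 0"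
    using psd_kernel_diag(1)[OF assms(1,2)] assms(3,4) by (metis Im_complex_of_real)+
  moreover have "Im (C i i + C i j + C j i + C j j) = 0"
    using psd_kernelD(1)[OF assms(2), of "\<lambda>p. if p = i then 1 else if p = j then 1 else 0"]
    by (simp add: quad_form_pair[OF assms(1,3,4) False])
  moreover have "Im (C i i + C i j * \<i> - \<i> * C j i + C j j) = 0"
    using psd_kernelD(1)[OF assms(2), of "\<lambda>p. if p = i then 1 else if p = j then \<i> else 0"]
    by (simp add: quad_form_pair[OF assms(1,3,4) False])
  ultimately show ?thesis by (simp add: complex_eq_iff)
qed

lemma psd_kernel_zero_diag_row:
  assumes "finite I" "psd_kernel I C" "k \<in> I" "j \<in> I" "C k k = 0"
  shows "C k j = 0"
proof (rule ccontr)
  assume nz: "C k j \<noteq> 0"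
  then have "j \<noteq> k" using assms(5) by auto
  define r where "r = (cmod (C k j))\<^sup>2"
  have "r > 0" using nz unfolding r_def by simp
  \<comment> \<open>as \<open>C k k = 0\<close>, the form on \<open>t e\<^sub>k + e\<^sub>j\<close> is affine in \<open>t\<close>; this \<open>t\<close> makes it \<open>-1\<close>\<close>
  define t where "t = - complex_of_real ((Re (C j j) + 1) / (2 * r)) * C k j"
  have swap: "cnj (C k j) * t = cnj t * C k j"
    unfolding t_def by simp
  have half: "cnj t * C k j = - complex_of_real ((Re (C j j) + 1) / 2)"
    unfolding t_def using \<open>r > 0\<close> complex_norm_square[of "C k j"]
    by (simp add: r_def field_simps mult.commute)
  have "quad_form I C (\<lambda>p. if p = k then t else if p = j then 1 else 0)
      = C j j + cnj t * C k j + cnj (C k j) * t"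
    using quad_form_pair[OF assms(1,3,4) \<open>j \<noteq> k\<close>[symmetric], of C t 1] assms(5)
      psd_kernel_hermitian[OF assms(1-4)]
    by simp
  also have "\<dots> = C j j - complex_of_real (Re (C j j) + 1)"
    unfolding swap half by (simp add: field_simps)
  finally have "Re (quad_form I C (\<lambda>p. if p = k then t else if p = j then 1 else 0)) = -1"
    by simp
  then show False using psd_kernelD(2)[OF assms(2)] by (metis neg_0_le_iff_le not_one_le_zero)
qed

lemma quad_form_shift:
  assumes "finite I" "k \<in> I"
  shows "quad_form I C (\<lambda>p. x p + (if p = k then l else 0)) = quad_form I C x
     + cnj l * (\<Sum>j\<in>I. C k j * x j) + (\<Sum>i\<in>I. cnj (x i) * C i k) * l + cnj l * C k k * l"
proof -
  define H where "H i = (\<Sum>j\<in>I. C i j * x j)" for i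
  have row: "(\<Sum>j\<in>I. C i j * (x j + (if j = k then l else 0))) = H i + C i k * l" for i
    unfolding H_def using assms
    by (simp add: distrib_left sum.distrib if_distrib[where f = "\<lambda>y. _ * y"] cong: if_cong)
  have "quad_form I C (\<lambda>p. x p + (if p = k then l else 0)) = (\<Sum>i\<in>I.
      (cnj (x i) + (if i = k then cnj l else 0)) * (\<Sum>j\<in>I. C i j * (x j + (if j = k then l else 0))))"
    unfolding quad_form_def by (intro sum.cong refl) (simp add: sum_distrib_left mult.assoc)
  also have "\<dots> = (\<Sum>i\<in>I. cnj (x i) * H i + cnj (x i) * C i k * l
      + (if i = k then cnj l * (H i + C i k * l) else 0))"
    unfolding row by (intro sum.cong refl) (simp add: algebra_simps)
  also have "\<dots> = (\<Sum>i\<in>I. cnj (x i) * H i) + (\<Sum>i\<in>I. cnj (x i) * C i k) * l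
      + cnj l * (H k + C k k * l)"
    using assms by (simp add: sum.distrib sum_distrib_right)
  also have "(\<Sum>i\<in>I. cnj (x i) * H i) = quad_form I C x"
    unfolding quad_form_def H_def by (simp add: sum_distrib_left mult.assoc)
  finally show ?thesis unfolding H_def by (simp add: algebra_simps)
qed

text \<open>If \<open>C k k = 0\<close> the Schur complement is \<open>C\<close> itself, since division by zero yields zero;
  by \<open>psd_kernel_zero_diag_row\<close> this is the right elimination step in that case too.\<close>

lemma psd_kernel_schur_complement:
  assumes "finite I" "psd_kernel I C" "k \<in> I"
  shows "psd_kernel I (\<lambda>i j. C i j - C i k * C k j / C k k)"
proof (cases "C k k = 0")
  case True
  then show ?thesis using assms(2) by simp
next
  case False
  define r where "r = C k k"
  have r_real: "cnj r = r"
    unfolding r_def by (metis psd_kernel_diag(1)[OF assms] complex_cnj_complex_of_real)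
  show ?thesis unfolding psd_kernel_def
  proof
    fix x
    define s where "s = (\<Sum>j\<in>I. C k j * x j)"
    define s' where "s' = (\<Sum>i\<in>I. cnj (x i) * C i k)"
    have "quad_form I (\<lambda>i j. C i j - C i k * C k j / C k k) x
        = quad_form I C x - (\<Sum>i\<in>I. \<Sum>j\<in>I. cnj (x i) * C i k * (C k j * x j)) / r"
      unfolding quad_form_def r_def by (simp add: sum_subtractf sum_divide_distrib algebra_simps)
    also have "\<dots> = quad_form I C x - s' * s / r"
      unfolding s_def s'_def by (simp add: sum_product)
    also have "\<dots> = quad_form I C (\<lambda>p. x p + (if p = k then - s / r else 0))"
      unfolding quad_form_shift[OF assms(1,3)] s_def[symmetric] s'_def[symmetric] r_def[symmetric]
      using False r_real by (simp add: r_def field_simps)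
    finally show "Im (quad_form I (\<lambda>i j. C i j - C i k * C k j / C k k) x) = 0 \<and>
        0 \<le> Re (quad_form I (\<lambda>i j. C i j - C i k * C k j / C k k) x)"
      using psd_kernelD[OF assms(2)] by simp
  qed
qed

lemma schur_complement_row_col_zero:
  assumes "finite I" "psd_kernel I C" "k \<in> I" "j \<in> I"
  shows "C k j - C k k * C k j / C k k = 0" and "C j k - C j k * C k k / C k k = 0"
proof -
  have zero: "C k j = 0 \<and> C j k = 0" if "C k k = 0"
    using psd_kernel_zero_diag_row[OF assms that] psd_kernel_hermitian[OF assms] by simp
  show "C k j - C k k * C k j / C k k = 0"
    using zero by (cases "C k k = 0") simp_all
  show "C j k - C j k * C k k / C k k = 0"
    using zero by (cases "C k k = 0") simp_all
qed

lemma psd_kernel_rank_one_factor: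
  assumes "finite I" "psd_kernel I C" "k \<in> I" "i \<in> I"
  defines "w \<equiv> \<lambda>j. C k j / complex_of_real (sqrt (Re (C k k)))"
  shows "C i k * C k j / C k k = cnj (w i) * w j"
proof -
  have "complex_of_real (sqrt (Re (C k k))) * complex_of_real (sqrt (Re (C k k))) = C k k"
    using psd_kernel_diag[OF assms(1-3)] by (simp flip: of_real_mult)
  then show ?thesis
    unfolding w_def psd_kernel_hermitian[OF assms(1-4)] by (simp add: field_simps)
qed

lemma psd_kernel_gram_supported:
  assumes "finite I"
  shows "S \<subseteq> I \<Longrightarrow> psd_kernel I C \<Longrightarrow> \<forall>i\<in>I. \<forall>j\<in>I. C i j \<noteq> 0 \<longrightarrow> i \<in> S \<and> j \<in> S
    \<Longrightarrow> \<exists>u. \<forall>i\<in>I. \<forall>j\<in>I. C i j = (\<Sum>k\<in>S. cnj (u k i) * u k j)"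
proof (induction S arbitrary: C rule: infinite_finite_induct)
  case (infinite S)
  then show ?case using assms finite_subset by blast
next
  case empty
  then show ?case by auto
next
  case (insert k S)
  define C' where "C' i j = C i j - C i k * C k j / C k k" for i j
  define w where "w j = C k j / complex_of_real (sqrt (Re (C k k)))" for j
  have k: "k \<in> I" using insert.prems(1) by simp
  have "psd_kernel I C'"
    unfolding C'_def by (rule psd_kernel_schur_complement[OF assms insert.prems(2) k])
  moreover have "\<forall>i\<in>I. \<forall>j\<in>I. C' i j \<noteq> 0 \<longrightarrow> i \<in> S \<and> j \<in> S"
  proof (intro ballI impI)
    fix i j assume ij: "i \<in> I" "j \<in> I" and "C' i j \<noteq> 0"
    then have "i \<noteq> k" "j \<noteq> k"
      using schur_complement_row_col_zero[OF assms insert.prems(2) k] by (auto simp: C'_def)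
    moreover have "C i j \<noteq> 0 \<or> C i k \<noteq> 0 \<and> C k j \<noteq> 0"
      using \<open>C' i j \<noteq> 0\<close> by (auto simp: C'_def)
    ultimately show "i \<in> S \<and> j \<in> S"
      using insert.prems(3) ij k by blast
  qed
  ultimately obtain u where u: "\<forall>i\<in>I. \<forall>j\<in>I. C' i j = (\<Sum>k\<in>S. cnj (u k i) * u k j)"
    using insert.IH insert.prems(1) by blast
  have "C i j = (\<Sum>k'\<in>insert k S. cnj ((u(k := w)) k' i) * (u(k := w)) k' j)" if "i \<in> I" "j \<in> I" for i j
  proof -
    have "(\<Sum>k'\<in>S. cnj ((u(k := w)) k' i) * (u(k := w)) k' j) = C' i j"
      using u that insert.hyps(2) by (auto intro: sum.cong)
    then show ?thesis
      using insert.hyps psd_kernel_rank_one_factor[OF assms insert.prems(2) k \<open>i \<in> I\<close>, of j]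
      by (simp add: C'_def w_def)
  qed
  then show ?case by blast
qed

lemma psd_kernel_gram:
  assumes "finite I" "psd_kernel I C"
  shows "\<exists>u. \<forall>i\<in>I. \<forall>j\<in>I. C i j = (\<Sum>k\<in>I. cnj (u k i) * u k j)"
  using psd_kernel_gram_supported[OF assms(1) order_refl assms(2)] by blast

section \<open>Completely positive maps and Kraus operators\<close>

definition op_linear :: "('d::finite op \<Rightarrow> 'e::finite op) \<Rightarrow> bool" where
  "op_linear L \<longleftrightarrow> (\<forall>A B. L (A + B) = L A + L B) \<and> (\<forall>z A. L (smat z A) = smat z (L A))"

definition completely_positive :: "('d::finite op \<Rightarrow> 'e::finite op) \<Rightarrow> bool" where
  "completely_positive L \<longleftrightarrow> (\<forall>k B. block_psd k B \<longrightarrow> block_psd k (\<lambda>i j. L (B i j)))"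

definition matrix_unit :: "'d::finite \<Rightarrow> 'd \<Rightarrow> 'd op" where
  "matrix_unit a b = (\<chi> x y. if x = a \<and> y = b then 1 else 0)"

lemma smat_component [simp]: "smat z A $ i $ j = z * A $ i $ j"
  by (simp add: smat_def)

lemma smat_0 [simp]: "smat 0 A = 0"
  by (simp add: vec_eq_iff)

lemma smat_1 [simp]: "smat 1 A = A"
  by (simp add: smat_def)

lemma smat_smat: "smat a (smat b A) = smat (a * b) A"
  by (simp add: vec_eq_iff)

lemma op_expansion: "A = (\<Sum>x\<in>UNIV. \<Sum>y\<in>UNIV. smat (A $ x $ y) (matrix_unit x y))"
proof -
  have "(\<Sum>x\<in>UNIV. \<Sum>y\<in>UNIV. A $ x $ y * (if a = x \<and> b = y then 1 else 0))
      = (\<Sum>x\<in>UNIV. if a = x then A $ x $ b else 0)" for a b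
    by (intro sum.cong refl) (auto simp: if_distrib cong: if_cong)
  then show ?thesis by (simp add: vec_eq_iff sum_component matrix_unit_def)
qed

lemma op_linear_expansion:
  fixes L :: "'d::finite op \<Rightarrow> 'e::finite op"
  assumes "op_linear L"
  shows "L A = (\<Sum>x\<in>UNIV. \<Sum>y\<in>UNIV. smat (A $ x $ y) (L (matrix_unit x y)))"
proof -
  have "L 0 = 0"
    using assms unfolding op_linear_def by (metis smat_0)
  then have sum: "L (sum f F) = (\<Sum>x\<in>F. L (f x))" for f and F :: "'x set"
    using sum_comp_morphism[of L f F] assms unfolding op_linear_def by (simp add: comp_def)
  show ?thesis
    using assms unfolding op_linear_def by (subst op_expansion) (simp add: sum)
qed

lemma adj_mult_mult_component:
  "(adj V ** A ** W) $ a $ b = (\<Sum>x\<in>UNIV. \<Sum>y\<in>UNIV. cnj (V $ x $ a) * A $ x $ y * W $ y $ b)"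
  by (simp add: matrix_matrix_mult_def adj_def sum_distrib_left sum_distrib_right mult.assoc)
    (rule sum.swap)

lemma matrix_unit_bilinear:
  "(\<Sum>a\<in>UNIV. \<Sum>b\<in>UNIV. f a * matrix_unit c c' $ a $ b * g b) = f c * g c'"
proof -
  have "f a * matrix_unit c c' $ a $ b * g b = (if b = c' then if a = c then f c * g c' else 0 else 0)"
    for a b
    by (simp add: matrix_unit_def)
  then show ?thesis by simp
qed

lemma block_psd_matrix_units: "block_psd k (\<lambda>i j. matrix_unit (g i) (g j))"
  unfolding block_psd_def Let_def
proof
  fix x :: "nat \<Rightarrow> complex^'a"
  define s where "s = (\<Sum>j<k. x j $ g j)"
  have "(\<Sum>i<k. \<Sum>j<k. \<Sum>a\<in>UNIV. \<Sum>b\<in>UNIV. cnj (x i $ a) * matrix_unit (g i) (g j) $ a $ b * x j $ b)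
      = cnj s * s"
    unfolding s_def by (simp add: matrix_unit_bilinear sum_product)
  also have "\<dots> = complex_of_real ((cmod s)\<^sup>2)"
    using complex_norm_square[of s] by (simp add: mult.commute)
  finally show "Im (\<Sum>i<k. \<Sum>j<k. \<Sum>a\<in>UNIV. \<Sum>b\<in>UNIV. cnj (x i $ a) * matrix_unit (g i) (g j) $ a $ b * x j $ b) = 0 \<and>
    0 \<le> Re (\<Sum>i<k. \<Sum>j<k. \<Sum>a\<in>UNIV. \<Sum>b\<in>UNIV. cnj (x i $ a) * matrix_unit (g i) (g j) $ a $ b * x j $ b)"
    by simp
qed

lemma sum_UNIV_pair: "(\<Sum>p\<in>UNIV. F p) = (\<Sum>c\<in>UNIV. \<Sum>a\<in>UNIV. F (c, a))"
  by (simp add: sum.cartesian_product case_prod_beta')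

lemma choi_psd_kernel:
  fixes L :: "'d::finite op \<Rightarrow> 'e::finite op"
  assumes "completely_positive L"
  shows "psd_kernel UNIV (\<lambda>p q. L (matrix_unit (fst p) (fst q)) $ snd p $ snd q)"
  unfolding psd_kernel_def
proof
  fix x :: "'d \<times> 'e \<Rightarrow> complex"
  obtain g where g: "bij_betw g {..<CARD('d)} (UNIV :: 'd set)"
    using ex_bij_betw_nat_finite[of "UNIV :: 'd set"] by (auto simp: atLeast0LessThan)
  define y where "y i = (\<chi> a. x (g i, a))" for i
  have "quad_form UNIV (\<lambda>p q. L (matrix_unit (fst p) (fst q)) $ snd p $ snd q) x
     = (\<Sum>c\<in>UNIV. \<Sum>c'\<in>UNIV. \<Sum>a\<in>UNIV. \<Sum>b\<in>UNIV. cnj (x (c, a)) * L (matrix_unit c c') $ a $ b * x (c', b))"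
    unfolding quad_form_def sum_UNIV_pair[where F = "\<lambda>p. \<Sum>q\<in>UNIV. _ p q"] sum_UNIV_pair
    by (intro sum.cong refl) (subst sum.swap, simp)
  also have "\<dots> = (\<Sum>i<CARD('d). \<Sum>j<CARD('d). \<Sum>a\<in>UNIV. \<Sum>b\<in>UNIV.
      cnj (y i $ a) * L (matrix_unit (g i) (g j)) $ a $ b * y j $ b)"
    unfolding y_def by (simp add: sum.reindex_bij_betw[OF g, symmetric])
  finally show "Im (quad_form UNIV (\<lambda>p q. L (matrix_unit (fst p) (fst q)) $ snd p $ snd q) x) = 0 \<and>
      0 \<le> Re (quad_form UNIV (\<lambda>p q. L (matrix_unit (fst p) (fst q)) $ snd p $ snd q) x)"
    using assms block_psd_matrix_units[of "CARD('d)" g]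
    unfolding completely_positive_def block_psd_def Let_def by simp
qed

lemma kraus_representation:
  fixes L :: "'d::finite op \<Rightarrow> 'd op"
  assumes "op_linear L" "completely_positive L"
  obtains W :: "'d \<times> 'd \<Rightarrow> 'd op" where "\<And>A. L A = (\<Sum>k\<in>UNIV. adj (W k) ** A ** W k)"
proof -
  obtain u :: "'d \<times> 'd \<Rightarrow> 'd \<times> 'd \<Rightarrow> complex" where
    u: "\<And>c a c' b. L (matrix_unit c c') $ a $ b = (\<Sum>k\<in>UNIV. cnj (u k (c, a)) * u k (c', b))"
    using psd_kernel_gram[OF finite_class.finite_UNIV choi_psd_kernel[OF assms(2)]] by fastforce
  define W where "W k = (\<chi> c a. u k (c, a))" for k
  have component: "L A $ a $ b = (\<Sum>k\<in>UNIV. adj (W k) ** A ** W k) $ a $ b" for A a b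
  proof -
    have "L A $ a $ b = (\<Sum>x\<in>UNIV. \<Sum>y\<in>UNIV. A $ x $ y * L (matrix_unit x y) $ a $ b)"
      by (subst op_linear_expansion[OF assms(1)]) (simp add: sum_component)
    also have "\<dots> = (\<Sum>x\<in>UNIV. \<Sum>y\<in>UNIV. \<Sum>k\<in>UNIV. cnj (u k (x, a)) * A $ x $ y * u k (y, b))"
      by (simp add: u sum_distrib_left mult_ac)
    also have "\<dots> = (\<Sum>x\<in>UNIV. \<Sum>k\<in>UNIV. \<Sum>y\<in>UNIV. cnj (u k (x, a)) * A $ x $ y * u k (y, b))"
      by (intro sum.cong refl sum.swap)
    also have "\<dots> = (\<Sum>k\<in>UNIV. \<Sum>x\<in>UNIV. \<Sum>y\<in>UNIV. cnj (u k (x, a)) * A $ x $ y * u k (y, b))"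
      by (rule sum.swap)
    finally show ?thesis
      by (simp add: sum_component adj_mult_mult_component W_def)
  qed
  then show ?thesis
    by (intro that[of W]) (simp add: vec_eq_iff component)
qed

section \<open>Kraus maps with state-independent trace\<close>

definition pure_state :: "('d::finite \<Rightarrow> complex) \<Rightarrow> 'd op" where
  "pure_state v = (\<chi> i j. v i * cnj (v j))"

lemma density_pure_state:
  fixes v :: "'d::finite \<Rightarrow> complex"
  assumes "(\<Sum>i\<in>UNIV. v i * cnj (v i)) = 1"
  shows "density (pure_state v)"
  unfolding density_def psd_def Let_def
proof (intro conjI allI)
  fix x :: "complex^'d"
  define s where "s = (\<Sum>j\<in>UNIV. cnj (v j) * x $ j)"
  have "(\<Sum>i\<in>UNIV. \<Sum>j\<in>UNIV. cnj (x $ i) * pure_state v $ i $ j * x $ j) = complex_of_real ((cmod s)\<^sup>2)"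
    using complex_norm_square[of s]
    unfolding s_def pure_state_def by (simp add: sum_product algebra_simps)
  then show "Im (\<Sum>i\<in>UNIV. \<Sum>j\<in>UNIV. cnj (x $ i) * pure_state v $ i $ j * x $ j) = 0"
    and "0 \<le> Re (\<Sum>i\<in>UNIV. \<Sum>j\<in>UNIV. cnj (x $ i) * pure_state v $ i $ j * x $ j)"
    by simp_all
next
  show "trace (pure_state v) = 1"
    using assms by (simp add: trace_def pure_state_def)
qed

lemma trace_sum: "trace (\<Sum>x\<in>F. f x) = (\<Sum>x\<in>F. trace (f x :: 'a::comm_semiring_1^'n^'n))"
  using sum_comp_morphism[of trace f F, OF trace_0[unfolded mat_0] trace_add] by (simp add: comp_def)

lemma matrix_mult_sum_right: "A ** (\<Sum>k\<in>F. B k) = (\<Sum>k\<in>F. A ** B k)"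
  using sum_comp_morphism[of "(**) A" B F] by (simp add: matrix_add_ldistrib comp_def)

lemma trace_kraus_map:
  "trace (\<Sum>k\<in>F. adj (W k) ** A ** W k) = trace (A ** (\<Sum>k\<in>F. W k ** adj (W k)))"
proof -
  have "trace (adj (W k) ** A ** W k) = trace (A ** (W k ** adj (W k)))" for k
    by (metis matrix_mul_assoc trace_mul_sym)
  then show ?thesis by (simp add: trace_sum matrix_mult_sum_right)
qed

lemma trace_pure_state_mult: "trace (pure_state v ** S) = quad_form UNIV (\<lambda>i j. S $ i $ j) v"
  unfolding trace_def quad_form_def pure_state_def matrix_matrix_mult_def
  by (simp add: mult_ac) (rule sum.swap)

lemma quad_form_constant_imp_scalar:
  assumes "finite I" "i \<in> I" "j \<in> I"
    and const: "\<And>v. (\<Sum>p\<in>I. v p * cnj (v p)) = 1 \<Longrightarrow> quad_form I C v = t"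
  shows "C i j = (if i = j then t else 0)"
proof -
  have diag: "C i i = t" if "i \<in> I" for i
  proof -
    have unit: "(\<Sum>p\<in>I. (\<lambda>p. if p = i then 1 else 0) p * cnj ((\<lambda>p. if p = i then 1 else 0) p)) = 1"
      using assms(1) that by (subst sum.mono_neutral_right[where S = "{i}"]) auto
    show ?thesis
      using const[OF unit] quad_form_single[OF assms(1) that, of C 1] by simp
  qed
  show ?thesis
  proof (cases "i = j")
    case False
    \<comment> \<open>polarization with the unit vectors \<open>(e\<^sub>i + b e\<^sub>j) / \<surd>2\<close> for \<open>b = 1\<close> and \<open>b = \<i>\<close>\<close>
    define s where "s = complex_of_real (sqrt (1 / 2))"
    have s: "cnj s * s = 1 / 2"
      unfolding s_def by (simp flip: of_real_mult)
    have pair: "cnj s * s * (t + b * C i j + cnj b * C j i + cnj b * t * b) = t"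
      if "cnj b * b = 1" for b
    proof -
      have "s * cnj s + b * s * cnj (b * s) = cnj s * s * (1 + cnj b * b)"
        by (simp add: algebra_simps)
      then have "s * cnj s + b * s * cnj (b * s) = 1"
        using s that by simp
      then have unit: "(\<Sum>p\<in>I. (\<lambda>p. if p = i then s else if p = j then b * s else 0) p
          * cnj ((\<lambda>p. if p = i then s else if p = j then b * s else 0) p)) = 1"
        using False assms(1-3) by (subst sum.mono_neutral_right[where S = "{i, j}"]) auto
      then show ?thesis
        using const[OF unit] quad_form_pair[OF assms(1-3) False, of C s "b * s"] diag assms(2,3)
        by (simp add: algebra_simps)
    qed
    have "C i j + C j i = 0" and "C i j - C j i = 0"
      using pair[of 1, unfolded s] pair[of "\<i>", unfolded s] by (simp_all add: field_simps)
    then show ?thesis using False by simp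
  qed (simp add: diag assms(3))
qed

lemma kraus_constant_trace_imp_scalar:
  fixes W :: "'k::finite \<Rightarrow> 'd::finite op"
  assumes "\<And>\<rho>. density \<rho> \<Longrightarrow> trace (\<Sum>k\<in>UNIV. adj (W k) ** \<rho> ** W k) = t"
  obtains p where "0 \<le> p" and "t = complex_of_real p"
    and "(\<Sum>k\<in>UNIV. W k ** adj (W k)) = smat (complex_of_real p) (mat 1)"
proof -
  define S where "S = (\<Sum>k\<in>UNIV. W k ** adj (W k))"
  have S: "S $ i $ j = (if i = j then t else 0)" for i j
  proof (rule quad_form_constant_imp_scalar[OF finite_class.finite_UNIV UNIV_I UNIV_I])
    fix v :: "'d \<Rightarrow> complex"
    assume "(\<Sum>p\<in>UNIV. v p * cnj (v p)) = 1"
    then show "quad_form UNIV (\<lambda>i j. S $ i $ j) v = t"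
      using assms[OF density_pure_state] by (simp add: trace_kraus_map trace_pure_state_mult S_def)
  qed
  define p where "p = (\<Sum>k\<in>UNIV. \<Sum>a\<in>UNIV. (cmod (W k $ undefined $ a))\<^sup>2)"
  have "S $ undefined $ undefined = complex_of_real p"
    by (simp add: S_def p_def matrix_matrix_mult_def adj_def sum_component of_real_sum
        flip: complex_norm_square)
  then have "t = complex_of_real p"
    using S by simp
  moreover have "S = smat (complex_of_real p) (mat 1)"
    using S calculation by (simp add: vec_eq_iff mat_def)
  moreover have "0 \<le> p"
    unfolding p_def by (intro sum_nonneg) simp
  ultimately show ?thesis
    using that unfolding S_def by blast
qed

section \<open>Homogeneous multi-variable maps\<close>

definition unit_index :: "nat \<Rightarrow> nat \<Rightarrow> nat list" where
  "unit_index n l = (replicate (Suc n) 0)[l := 1]"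

definition slot :: "nat \<Rightarrow> nat \<Rightarrow> 'd::finite op \<Rightarrow> 'd op list" where
  "slot n l A = (replicate (Suc n) 0)[l := A]"

lemma length_unit_index [simp]: "length (unit_index n l) = Suc n"
  by (simp add: unit_index_def del: replicate_Suc)

lemma nth_unit_index: "i \<le> n \<Longrightarrow> unit_index n l ! i = (if i = l then 1 else 0)"
  by (simp add: unit_index_def nth_list_update del: replicate_Suc)

lemma sum_list_unit_index: "l \<le> n \<Longrightarrow> sum_list (unit_index n l) = 1"
  by (simp add: unit_index_def sum_list_update del: replicate_Suc)

lemma sum_list_eq_1_imp_unit_index:
  assumes "length m = Suc n" "sum_list m = 1"
  shows "\<exists>l\<le>n. m = unit_index n l"
proof -
  obtain l where l: "l < length m" "m ! l \<noteq> 0"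
    using assms(2) sum_list_eq_0_iff[of m] by (auto simp: in_set_conv_nth)
  then have "m ! l = 1"
    using elem_le_sum_list[OF l(1)] assms(2) by simp
  then have "sum_list (m[l := 0]) = 0"
    using sum_list_update[OF l(1), of 0] assms(2) by simp
  then have "m[l := 0] = replicate (Suc n) 0"
    using replicate_length_same[of "m[l := 0]" 0] assms(1) sum_list_eq_0_iff[of "m[l := 0]"]
    by (simp del: replicate_Suc)
  then have "m = unit_index n l"
    unfolding unit_index_def using \<open>m ! l = 1\<close> by (metis list_update_id list_update_overwrite)
  then show ?thesis
    using l(1) assms(1) by (auto simp: less_Suc_eq_le)
qed

lemma inj_on_unit_index: "inj_on (unit_index n) {..n}"
proof
  fix l l' assume "l \<in> {..n}" "l' \<in> {..n}" and eq: "unit_index n l = unit_index n l'"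
  then have "unit_index n l' ! l = 1"
    using nth_unit_index[of l n l] by simp
  then show "l = l'"
    using nth_unit_index[of l n l'] \<open>l \<in> {..n}\<close> by (simp split: if_splits)
qed

lemma homog_in_scale_args:
  assumes homog: "\<forall>i\<le>n. homog_in n F i (m ! i)" and len: "length \<rho>s = Suc n"
  shows "F (map (\<lambda>i. smat (z i) (\<rho>s ! i)) [0..<Suc n]) = smat (\<Prod>i<Suc n. z i ^ (m ! i)) (F \<rho>s)"
proof -
  have partial: "F (map (\<lambda>i. if i < j then smat (z i) (\<rho>s ! i) else \<rho>s ! i) [0..<Suc n])
      = smat (\<Prod>i<j. z i ^ (m ! i)) (F \<rho>s)" if "j \<le> Suc n" for j
    using that
  proof (induction j)
    case 0
    then show ?case
      using len map_nth[of \<rho>s] by simp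
  next
    case (Suc j)
    define xs where "xs = map (\<lambda>i. if i < j then smat (z i) (\<rho>s ! i) else \<rho>s ! i) [0..<Suc n]"
    have "map (\<lambda>i. if i < Suc j then smat (z i) (\<rho>s ! i) else \<rho>s ! i) [0..<Suc n]
        = xs[j := smat (z j) (xs ! j)]"
      using Suc.prems
      by (intro nth_equalityI) (auto simp: xs_def nth_list_update simp del: upt_Suc)
    moreover have "F (xs[j := smat (z j) (xs ! j)]) = smat (z j ^ (m ! j)) (F xs)"
      using homog Suc.prems unfolding homog_in_def xs_def by simp
    ultimately show ?case
      using Suc by (simp add: xs_def smat_smat mult.commute)
  qed
  have full: "map (\<lambda>i. if i < Suc n then smat (z i) (\<rho>s ! i) else \<rho>s ! i) [0..<Suc n]
      = map (\<lambda>i. smat (z i) (\<rho>s ! i)) [0..<Suc n]"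
    by (rule map_cong) (auto simp del: upt_Suc)
  show ?thesis
    using partial[OF order_refl] unfolding full .
qed

lemma homog_in_scale_all:
  assumes "\<forall>i\<le>n. homog_in n F i (m ! i)" "length m = Suc n" "length \<rho>s = Suc n"
  shows "F (map (smat c) \<rho>s) = smat (c ^ sum_list m) (F \<rho>s)"
proof -
  have "map (smat c) \<rho>s = map (\<lambda>i. smat c (\<rho>s ! i)) [0..<Suc n]"
    using assms(3) by (intro nth_equalityI) (simp_all del: upt_Suc)
  moreover have "(\<Prod>i<Suc n. c ^ (m ! i)) = c ^ sum_list m"
    using assms(2) by (simp add: power_sum power_add sum_list_sum_nth atLeast0LessThan)
  ultimately show ?thesis
    using homog_in_scale_args[OF assms(1,3), of "\<lambda>_. c"] by (simp del: upt_Suc lessThan_Suc)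
qed

lemma length_slot [simp]: "length (slot n l A) = Suc n"
  by (simp add: slot_def del: replicate_Suc)

lemma nth_slot: "i \<le> n \<Longrightarrow> slot n l A ! i = (if i = l then A else 0)"
  by (simp add: slot_def nth_list_update del: replicate_Suc)

lemma slot_update [simp]: "(slot n l A)[l := B] = slot n l B"
  by (simp add: slot_def del: replicate_Suc)

lemma homog_in_unit_index_slot:
  assumes homog: "\<forall>i\<le>n. homog_in n F i (unit_index n l ! i)" and "l \<le> n" "length \<rho>s = Suc n"
  shows "F \<rho>s = F (slot n l (\<rho>s ! l))"
proof -
  \<comment> \<open>scaling the other arguments by \<open>0\<close> costs \<open>0 ^ 0 = 1\<close>, as they enter with degree \<open>0\<close>\<close>
  define z :: "nat \<Rightarrow> complex" where "z i = (if i = l then 1 else 0)" for i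
  have "slot n l (\<rho>s ! l) = map (\<lambda>i. smat (z i) (\<rho>s ! i)) [0..<Suc n]"
    by (intro nth_equalityI) (auto simp: nth_slot z_def less_Suc_eq_le simp del: upt_Suc)
  moreover have "(\<Prod>i<Suc n. z i ^ (unit_index n l ! i)) = 1"
    by (intro prod.neutral) (simp add: z_def nth_unit_index)
  ultimately show ?thesis
    using homog_in_scale_args[OF homog assms(3), of z] by simp
qed

lemma op_linear_slot:
  assumes "additive_in n F l" "homog_in n F l 1" "l \<le> n"
  shows "op_linear (\<lambda>A. F (slot n l A))"
  unfolding op_linear_def
proof (intro conjI allI)
  fix A B
  have "F ((slot n l 0)[l := A + B]) = F ((slot n l 0)[l := A]) + F ((slot n l 0)[l := B])"
    using assms(1) length_slot unfolding additive_in_def by blast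
  then show "F (slot n l (A + B)) = F (slot n l A) + F (slot n l B)"
    by simp
next
  fix z A
  have "F ((slot n l A)[l := smat z (slot n l A ! l)]) = smat (z ^ 1) (F (slot n l A))"
    using assms(2) length_slot unfolding homog_in_def by blast
  then show "F (slot n l (smat z A)) = smat z (F (slot n l A))"
    using nth_slot[OF assms(3), of l A] by simp
qed

lemma block_psd_zero: "block_psd k (\<lambda>i j. 0)"
  by (simp add: block_psd_def)

lemma completely_positive_slot:
  assumes "mv_CP n F" "l \<le> n"
  shows "completely_positive (\<lambda>A. F (slot n l A))"
  unfolding completely_positive_def
proof (intro allI impI)
  fix k and B :: "nat \<Rightarrow> nat \<Rightarrow> 'a op"
  assume "block_psd k B"
  define \<rho>b where "\<rho>b m = (if m = l then B else (\<lambda>i j. 0))" for m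
  have slot: "map (\<lambda>m. \<rho>b m i j) [0..<Suc n] = slot n l (B i j)" for i j
    by (intro nth_equalityI) (auto simp: nth_slot \<rho>b_def less_Suc_eq_le simp del: upt_Suc)
  have "\<forall>m\<le>n. block_psd k (\<rho>b m)"
    using \<open>block_psd k B\<close> by (simp add: \<rho>b_def block_psd_zero)
  then have "block_psd k (\<lambda>i j. F (map (\<lambda>m. \<rho>b m i j) [0..<Suc n]))"
    using assms(1) unfolding mv_CP_def by blast
  then show "block_psd k (\<lambda>i j. F (slot n l (B i j)))"
    unfolding slot .
qed

lemma sum_degree_one_eq:
  fixes x :: "'m \<Rightarrow> complex" and deg :: "'m \<Rightarrow> nat"
  assumes "finite M"
    and scale: "\<And>p. 0 \<le> p \<Longrightarrow> p \<le> 1 \<Longrightarrow>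
      (\<Sum>m\<in>M. complex_of_real p ^ deg m * x m) = complex_of_real p * (\<Sum>m\<in>M. x m)"
  shows "(\<Sum>m\<in>{m\<in>M. deg m = 1}. x m) = (\<Sum>m\<in>M. x m)"
proof -
  \<comment> \<open>both sides of \<open>scale\<close> are polynomials in \<open>p\<close>; compare their coefficients of \<open>p\<^sup>1\<close>\<close>
  define D where "D = Suc (\<Sum>m\<in>M. deg m)"
  define c where "c d = (\<Sum>m\<in>{m\<in>M. deg m = d}. x m) - (if d = 1 then \<Sum>m\<in>M. x m else 0)" for d
  have deg: "deg ` M \<subseteq> {..D}"
    using member_le_sum[of _ M deg] assms(1) by (force simp: D_def)
  have "(\<Sum>d\<le>D. (\<Sum>m\<in>{m\<in>M. deg m = d}. x m) * z ^ d) = (\<Sum>m\<in>M. x m * z ^ deg m)" for z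
  proof -
    have "(\<Sum>d\<le>D. (\<Sum>m\<in>{m\<in>M. deg m = d}. x m) * z ^ d)
        = (\<Sum>d\<le>D. \<Sum>m\<in>{m\<in>M. deg m = d}. x m * z ^ deg m)"
      by (auto simp: sum_distrib_right intro!: sum.cong)
    also have "\<dots> = (\<Sum>m\<in>M. x m * z ^ deg m)"
      by (rule sum.group[OF assms(1) finite_atMost deg])
    finally show ?thesis .
  qed
  moreover have "(\<Sum>d\<le>D. (if d = 1 then \<Sum>m\<in>M. x m else 0) * z ^ d) = z * (\<Sum>m\<in>M. x m)" for z
    by (simp add: D_def if_distrib[where f = "\<lambda>u. u * _"] cong: if_cong)
  ultimately have poly: "(\<Sum>d\<le>D. c d * z ^ d) = (\<Sum>m\<in>M. x m * z ^ deg m) - z * (\<Sum>m\<in>M. x m)" for z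
    by (simp add: c_def left_diff_distrib sum_subtractf)
  have "complex_of_real ` {0..1} \<subseteq> {z. (\<Sum>d\<le>D. c d * z ^ d) = 0}"
    using scale by (auto simp: poly mult.commute)
  moreover have "infinite (complex_of_real ` {0..1})"
  proof
    assume "finite (complex_of_real ` {0..1})"
    then have "finite {0..1::real}"
      by (rule finite_imageD) (rule inj_on_subset[OF inj_of_real subset_UNIV])
    then show False
      using infinite_Icc[of "0::real" 1] by simp
  qed
  ultimately have "infinite {z. (\<Sum>d\<le>D. c d * z ^ d) = 0}"
    using finite_subset by blast
  then have "c 1 = 0"
    using polyfun_finite_roots[of c D] by (auto simp: D_def)
  then show ?thesis
    by (simp add: c_def)
qed

text \<open>\<open>linear_part n M Kd l\<close> is the paper's \<open>K_(0,...,1,...,0)\<close> (with the \<open>1\<close> in slot \<open>l\<close>),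
  viewed as a map of its \<open>l\<close>-th argument; it is zero if that part is absent from \<open>M\<close>.\<close>

definition linear_part ::
    "nat \<Rightarrow> nat list set \<Rightarrow> (nat list \<Rightarrow> 'd op list \<Rightarrow> 'd op) \<Rightarrow> nat \<Rightarrow> 'd::finite op \<Rightarrow> 'd op" where
  "linear_part n M Kd l A = (if unit_index n l \<in> M then Kd (unit_index n l) (slot n l A) else 0)"

lemma linear_part_kraus:
  assumes cp: "\<forall>m\<in>M. mv_CP n (Kd m)"
    and homog: "\<forall>m\<in>M. \<forall>i\<le>n. homog_in n (Kd m) i (m ! i)"
    and lin: "\<forall>m\<in>M. \<forall>i\<le>n. (m ! i = 1 \<and> (\<forall>j\<le>n. j \<noteq> i \<longrightarrow> m ! j = 0)) \<longrightarrow> additive_in n (Kd m) i"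
    and "l \<le> n"
  shows "\<exists>W :: 'd::finite \<times> 'd \<Rightarrow> 'd op. \<forall>A. linear_part n M Kd l A = (\<Sum>k\<in>UNIV. adj (W k) ** A ** W k)"
proof (cases "unit_index n l \<in> M")
  case True
  have "unit_index n l ! l = 1 \<and> (\<forall>j\<le>n. j \<noteq> l \<longrightarrow> unit_index n l ! j = 0)"
    using \<open>l \<le> n\<close> by (simp add: nth_unit_index)
  then have additive: "additive_in n (Kd (unit_index n l)) l"
    using lin True \<open>l \<le> n\<close> by blast
  have homog_1: "homog_in n (Kd (unit_index n l)) l 1"
    using homog True \<open>l \<le> n\<close> nth_unit_index[of l n l] by force
  obtain W :: "'d \<times> 'd \<Rightarrow> 'd op"
    where "\<And>A. Kd (unit_index n l) (slot n l A) = (\<Sum>k\<in>UNIV. adj (W k) ** A ** W k)"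
    using kraus_representation[OF op_linear_slot[OF additive homog_1 \<open>l \<le> n\<close>]
        completely_positive_slot[OF _ \<open>l \<le> n\<close>]] cp True
    by blast
  then have "\<forall>A. linear_part n M Kd l A = (\<Sum>k\<in>UNIV. adj (W k) ** A ** W k)"
    using True by (simp add: linear_part_def)
  then show ?thesis
    by blast
next
  case False
  then show ?thesis
    by (intro exI[of _ "\<lambda>_. 0"]) (simp add: linear_part_def)
qed

lemma linear_parts_kraus:
  assumes cp: "\<forall>m\<in>M. mv_CP n (Kd m)"
    and homog: "\<forall>m\<in>M. \<forall>i\<le>n. homog_in n (Kd m) i (m ! i)"
    and lin: "\<forall>m\<in>M. \<forall>i\<le>n. (m ! i = 1 \<and> (\<forall>j\<le>n. j \<noteq> i \<longrightarrow> m ! j = 0)) \<longrightarrow> additive_in n (Kd m) i"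
  obtains W :: "nat \<Rightarrow> 'd::finite \<times> 'd \<Rightarrow> 'd op"
  where "\<forall>l\<le>n. \<forall>A. linear_part n M Kd l A = (\<Sum>k\<in>UNIV. adj (W l k) ** A ** W l k)"
proof -
  have "\<forall>l\<le>n. \<exists>W :: 'd \<times> 'd \<Rightarrow> 'd op. \<forall>A. linear_part n M Kd l A = (\<Sum>k\<in>UNIV. adj (W k) ** A ** W k)"
    using linear_part_kraus[OF cp homog lin] by blast
  then show ?thesis
    using that unfolding choice_iff' by blast
qed

lemma nonsignalling_imp_degree_one:
  assumes fin: "finite M" and deg_len: "\<forall>m\<in>M. length m = Suc n"
    and decomp: "\<forall>\<rho>s. length \<rho>s = Suc n \<longrightarrow> K \<rho>s = (\<Sum>m\<in>M. Kd m \<rho>s)"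
    and homog: "\<forall>m\<in>M. \<forall>i\<le>n. homog_in n (Kd m) i (m ! i)"
    and nonsig: "\<forall>p::real. \<forall>\<rho>s. 0 \<le> p \<and> p \<le> 1 \<and> length \<rho>s = Suc n \<and> (\<forall>\<rho>\<in>set \<rho>s. density \<rho>)
      \<longrightarrow> K (map (smat (complex_of_real p)) \<rho>s) = smat (complex_of_real p) (K \<rho>s)"
    and len: "length \<rho>s = Suc n" and dens: "\<forall>\<rho>\<in>set \<rho>s. density \<rho>"
  shows "K \<rho>s = (\<Sum>m\<in>{m\<in>M. sum_list m = 1}. Kd m \<rho>s)"
proof -
  have scale: "(\<Sum>m\<in>M. smat (complex_of_real p ^ sum_list m) (Kd m \<rho>s))
      = smat (complex_of_real p) (\<Sum>m\<in>M. Kd m \<rho>s)" if "0 \<le> p" "p \<le> 1" for p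
  proof -
    have "(\<Sum>m\<in>M. smat (complex_of_real p ^ sum_list m) (Kd m \<rho>s))
        = (\<Sum>m\<in>M. Kd m (map (smat (complex_of_real p)) \<rho>s))"
      using homog deg_len len by (intro sum.cong refl homog_in_scale_all[symmetric]) auto
    also have "\<dots> = K (map (smat (complex_of_real p)) \<rho>s)"
      using decomp len by simp
    also have "\<dots> = smat (complex_of_real p) (K \<rho>s)"
      using nonsig that len dens by blast
    finally show ?thesis
      using decomp len by simp
  qed
  have "(\<Sum>m\<in>{m\<in>M. sum_list m = 1}. Kd m \<rho>s $ a $ b) = (\<Sum>m\<in>M. Kd m \<rho>s $ a $ b)" for a b
  proof (rule sum_degree_one_eq[OF fin])
    fix p :: real
    assume "0 \<le> p" "p \<le> 1"
    from arg_cong[where f = "\<lambda>A. A $ a $ b", OF scale[OF this]]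
    show "(\<Sum>m\<in>M. complex_of_real p ^ sum_list m * Kd m \<rho>s $ a $ b)
        = complex_of_real p * (\<Sum>m\<in>M. Kd m \<rho>s $ a $ b)"
      by (simp add: sum_component sum_distrib_left)
  qed
  then show ?thesis
    using decomp len by (simp add: vec_eq_iff sum_component)
qed

lemma degree_one_part_eq_linear_parts:
  assumes deg_len: "\<forall>m\<in>M. length m = Suc n"
    and homog: "\<forall>m\<in>M. \<forall>i\<le>n. homog_in n (Kd m) i (m ! i)"
    and len: "length \<rho>s = Suc n"
  shows "(\<Sum>m\<in>{m\<in>M. sum_list m = 1}. Kd m \<rho>s) = (\<Sum>l\<le>n. linear_part n M Kd l (\<rho>s ! l))"
proof -
  have "{m\<in>M. sum_list m = 1} = unit_index n ` {l\<in>{..n}. unit_index n l \<in> M}"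
    using sum_list_eq_1_imp_unit_index sum_list_unit_index deg_len by fastforce
  moreover have "inj_on (unit_index n) {l\<in>{..n}. unit_index n l \<in> M}"
    by (rule inj_on_subset[OF inj_on_unit_index]) auto
  ultimately have "(\<Sum>m\<in>{m\<in>M. sum_list m = 1}. Kd m \<rho>s)
      = (\<Sum>l\<in>{l\<in>{..n}. unit_index n l \<in> M}. Kd (unit_index n l) \<rho>s)"
    using sum.reindex[of "unit_index n" _ "\<lambda>m. Kd m \<rho>s"] by (simp add: comp_def)
  also have "\<dots> = (\<Sum>l\<in>{l\<in>{..n}. unit_index n l \<in> M}. linear_part n M Kd l (\<rho>s ! l))"
    using homog len by (intro sum.cong refl) (simp add: linear_part_def homog_in_unit_index_slot)
  also have "\<dots> = (\<Sum>l\<le>n. linear_part n M Kd l (\<rho>s ! l))"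
    by (intro sum.mono_neutral_left) (auto simp: linear_part_def)
  finally show ?thesis .
qed

lemma sum_nth_constant_imp_summand_constant:
  fixes f :: "nat \<Rightarrow> 'a \<Rightarrow> 'b::cancel_comm_monoid_add"
  assumes const: "\<And>xs. length xs = Suc n \<Longrightarrow> \<forall>x\<in>set xs. P x \<Longrightarrow> (\<Sum>l\<le>n. f l (xs ! l)) = c"
    and "P a" "P b" "l \<le> n"
  shows "f l a = f l b"
proof -
  define xs where "xs = replicate (Suc n) a"
  have len: "length xs = Suc n" "length (xs[l := b]) = Suc n"
    by (simp_all add: xs_def del: replicate_Suc)
  have "\<forall>x\<in>set xs. P x" "\<forall>x\<in>set (xs[l := b]). P x"
    using set_update_subset_insert[of xs l b] assms(2,3) by (auto simp: xs_def simp del: replicate_Suc)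
  then have "(\<Sum>l'\<le>n. f l' (xs[l := b] ! l')) = (\<Sum>l'\<le>n. f l' (xs ! l'))"
    using const len by simp
  moreover have "(\<Sum>l'\<le>n. f l' (ys ! l')) = f l (ys ! l) + (\<Sum>l'\<in>{..n} - {l}. f l' (ys ! l'))" for ys
    using assms(4) by (simp add: sum.remove)
  moreover have "(\<Sum>l'\<in>{..n} - {l}. f l' (xs[l := b] ! l')) = (\<Sum>l'\<in>{..n} - {l}. f l' (xs ! l'))"
    by (intro sum.cong) auto
  moreover have "xs ! l = a" "xs[l := b] ! l = b"
    using assms(4) len by (simp_all add: xs_def del: replicate_Suc)
  ultimately show ?thesis
    by simp
qed

lemma density_basis_state: "density (pure_state (\<lambda>i. if i = c then 1 else 0))"
  by (rule density_pure_state) (simp add: if_distrib[where f = "\<lambda>u. u * _"] cong: if_cong)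

lemma trace_preserving_kraus_weights:
  fixes W :: "nat \<Rightarrow> 'k::finite \<Rightarrow> 'd::finite op"
  assumes tp: "\<And>\<rho>s. length \<rho>s = Suc n \<Longrightarrow> \<forall>\<rho>\<in>set \<rho>s. density \<rho> \<Longrightarrow>
      (\<Sum>l\<le>n. trace (\<Sum>k\<in>UNIV. adj (W l k) ** (\<rho>s ! l) ** W l k)) = 1"
  obtains p where "\<forall>l\<le>n. 0 \<le> p l" and "(\<Sum>l\<le>n. p l) = 1"
    and "\<forall>l\<le>n. (\<Sum>k\<in>UNIV. W l k ** adj (W l k)) = smat (complex_of_real (p l)) (mat 1)"
proof -
  define \<sigma> :: "'d op" where "\<sigma> = pure_state (\<lambda>i. if i = undefined then 1 else 0)"
  have "density \<sigma>"
    unfolding \<sigma>_def by (rule density_basis_state)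
  have "\<forall>l\<le>n. \<exists>p. 0 \<le> p \<and> trace (\<Sum>k\<in>UNIV. adj (W l k) ** \<sigma> ** W l k) = complex_of_real p
      \<and> (\<Sum>k\<in>UNIV. W l k ** adj (W l k)) = smat (complex_of_real p) (mat 1)"
  proof (intro allI impI)
    fix l assume "l \<le> n"
    have "trace (\<Sum>k\<in>UNIV. adj (W l k) ** \<tau> ** W l k) = trace (\<Sum>k\<in>UNIV. adj (W l k) ** \<sigma> ** W l k)"
      if "density \<tau>" for \<tau>
      by (rule sum_nth_constant_imp_summand_constant[where P = density
          and f = "\<lambda>l \<rho>. trace (\<Sum>k\<in>UNIV. adj (W l k) ** \<rho> ** W l k)", OF tp])
        (use \<open>density \<sigma>\<close> \<open>density \<tau>\<close> \<open>l \<le> n\<close> in auto)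
    then obtain q where "0 \<le> q" "trace (\<Sum>k\<in>UNIV. adj (W l k) ** \<sigma> ** W l k) = complex_of_real q"
      "(\<Sum>k\<in>UNIV. W l k ** adj (W l k)) = smat (complex_of_real q) (mat 1)"
      by (rule kraus_constant_trace_imp_scalar)
    then show "\<exists>p. 0 \<le> p \<and> trace (\<Sum>k\<in>UNIV. adj (W l k) ** \<sigma> ** W l k) = complex_of_real p
      \<and> (\<Sum>k\<in>UNIV. W l k ** adj (W l k)) = smat (complex_of_real p) (mat 1)"
      by blast
  qed
  then obtain p where p: "\<forall>l\<le>n. 0 \<le> p l \<and> trace (\<Sum>k\<in>UNIV. adj (W l k) ** \<sigma> ** W l k) = complex_of_real (p l)
      \<and> (\<Sum>k\<in>UNIV. W l k ** adj (W l k)) = smat (complex_of_real (p l)) (mat 1)"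
    unfolding choice_iff' by blast
  have "complex_of_real (\<Sum>l\<le>n. p l) = 1"
    using tp[of "replicate (Suc n) \<sigma>"] \<open>density \<sigma>\<close> p by (simp add: of_real_sum del: replicate_Suc)
  then have "(\<Sum>l\<le>n. p l) = 1"
    by (simp only: of_real_eq_1_iff)
  then show ?thesis
    using that p by blast
qed

theorem mainTheorem4:
  fixes n :: nat
    and K :: "'d::finite op list \<Rightarrow> 'd op"
    and M :: "nat list set"
    and Kd :: "nat list \<Rightarrow> 'd op list \<Rightarrow> 'd op"
  assumes fin: "finite M"
    and deg_len: "\<forall>m\<in>M. length m = Suc n"
    and decomp: "\<forall>\<rho>s. length \<rho>s = Suc n \<longrightarrow> K \<rho>s = (\<Sum>m\<in>M. Kd m \<rho>s)"
    and cp: "\<forall>m\<in>M. mv_CP n (Kd m)"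
    and homog: "\<forall>m\<in>M. \<forall>i\<le>n. homog_in n (Kd m) i (m ! i)"
    and lin: "\<forall>m\<in>M. \<forall>i\<le>n. (m ! i = 1 \<and> (\<forall>j\<le>n. j \<noteq> i \<longrightarrow> m ! j = 0))
                \<longrightarrow> additive_in n (Kd m) i"
    and nonsig: "\<forall>p::real. \<forall>\<rho>s. 0 \<le> p \<and> p \<le> 1 \<and> length \<rho>s = Suc n
                   \<and> (\<forall>\<rho>\<in>set \<rho>s. density \<rho>)
                   \<longrightarrow> K (map (smat (complex_of_real p)) \<rho>s) = smat (complex_of_real p) (K \<rho>s)"
    and tp: "\<forall>\<rho>s. length \<rho>s = Suc n \<and> (\<forall>\<rho>\<in>set \<rho>s. density \<rho>) \<longrightarrow> trace (K \<rho>s) = 1"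
  shows "\<exists>(N::nat) (V :: nat \<Rightarrow> nat \<Rightarrow> 'd op) (p :: nat \<Rightarrow> real).
           (\<forall>m\<le>n. 0 \<le> p m) \<and> (\<Sum>m\<le>n. p m) = 1 \<and>
           (\<forall>m\<le>n. (\<Sum>\<alpha><N. V m \<alpha> ** adj (V m \<alpha>)) = smat (complex_of_real (p m)) (mat 1)) \<and>
           (\<forall>\<rho>s. length \<rho>s = Suc n \<and> (\<forall>\<rho>\<in>set \<rho>s. density \<rho>) \<longrightarrow>
              K \<rho>s = (\<Sum>m\<le>n. \<Sum>\<alpha><N. adj (V m \<alpha>) ** (\<rho>s ! m) ** V m \<alpha>))"
proof -
  obtain W :: "nat \<Rightarrow> 'd \<times> 'd \<Rightarrow> 'd op"
    where W: "\<forall>l\<le>n. \<forall>A. linear_part n M Kd l A = (\<Sum>k\<in>UNIV. adj (W l k) ** A ** W l k)"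
    by (rule linear_parts_kraus[OF cp homog lin])
  have kraus_form: "K \<rho>s = (\<Sum>l\<le>n. \<Sum>k\<in>UNIV. adj (W l k) ** (\<rho>s ! l) ** W l k)"
    if "length \<rho>s = Suc n" "\<forall>\<rho>\<in>set \<rho>s. density \<rho>" for \<rho>s
    using nonsignalling_imp_degree_one[OF fin deg_len decomp homog nonsig that]
      degree_one_part_eq_linear_parts[OF deg_len homog that(1)] W by simp
  obtain p where p: "\<forall>l\<le>n. 0 \<le> p l" "(\<Sum>l\<le>n. p l) = 1"
      "\<forall>l\<le>n. (\<Sum>k\<in>UNIV. W l k ** adj (W l k)) = smat (complex_of_real (p l)) (mat 1)"
    by (rule trace_preserving_kraus_weights[of n W]) (use tp kraus_form in \<open>simp add: trace_sum\<close>)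
  obtain h where h: "bij_betw h {..<CARD('d \<times> 'd)} (UNIV :: ('d \<times> 'd) set)"
    using ex_bij_betw_nat_finite[of "UNIV :: ('d \<times> 'd) set"] by (auto simp: atLeast0LessThan)
  define V where "V l \<alpha> = W l (h \<alpha>)" for l \<alpha>
  have "(\<Sum>\<alpha><CARD('d \<times> 'd). V l \<alpha> ** adj (V l \<alpha>)) = (\<Sum>k\<in>UNIV. W l k ** adj (W l k))"
    and "(\<Sum>\<alpha><CARD('d \<times> 'd). adj (V l \<alpha>) ** \<rho> ** V l \<alpha>) = (\<Sum>k\<in>UNIV. adj (W l k) ** \<rho> ** W l k)"
    for l \<rho>
    unfolding V_def by (rule sum.reindex_bij_betw[OF h])+
  then show ?thesis
    using p kraus_form by (intro exI[of _ "CARD('d \<times> 'd)"] exI[of _ V] exI[of _ p]) simp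
qed

end
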